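(* For a fixed typed DAG task $G=(V,E,\gamma,c)$, the quantity \[ B_1(M)=len(\hat G)+\sum_{s\in S}\frac{vol_s(G)}{M_s} \] is non-increasing in each $M_s$ (with the other $M_{s'}$ fixed), i.e., increasing the number of cores of any type never increases this bound.
   Context: A typed DAG task is $G=(V,E,\gamma,c)$ where $(V,E)$ is a finite directed acyclic graph with a unique source and a unique sink, $S$ is a finite set of core types, $\gamma:V\to S$ gives the type of each vertex, and $c:V\to\mathbb{R}_{\ge0}$ gives the WCET of each vertex. The platform has $M_s\ge1$ cores of type $s$, $M=(M_s)_{s\in S}$. $vol_s(G)=\sum_{u\in V,\gamma(u)=s}c(u)$. The scaled graph $\hat G$ has the same vertices, edges and types as $G$ with weights $\hat c(v)=c(v)(1-1/M_{\gamma(v)})$, and $len(\hat G)$ is its longest path length with respect to $\hat c$ (which depends on $M$). *)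

theory Defs
  imports Main "HOL-Library.Multiset" Complex_Main
begin

definition is_source :: "'v set \<Rightarrow> ('v \<times> 'v) set \<Rightarrow> 'v \<Rightarrow> bool" where
  "is_source V E v \<longleftrightarrow> v \<in> V \<and> (\<forall>u. (u, v) \<notin> E)"

definition is_sink :: "'v set \<Rightarrow> ('v \<times> 'v) set \<Rightarrow> 'v \<Rightarrow> bool" where
  "is_sink V E v \<longleftrightarrow> v \<in> V \<and> (\<forall>u. (v, u) \<notin> E)"

definition typed_dag_task ::
  "'v set \<Rightarrow> ('v \<times> 'v) set \<Rightarrow> 's set \<Rightarrow> ('v \<Rightarrow> 's) \<Rightarrow> ('v \<Rightarrow> real) \<Rightarrow> bool" where
  "typed_dag_task V E S \<gamma> c \<longleftrightarrow>
     finite V \<and> E \<subseteq> V \<times> V \<and> acyclic E \<and>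
     (\<exists>!v. is_source V E v) \<and> (\<exists>!v. is_sink V E v) \<and>
     finite S \<and> (\<forall>v\<in>V. \<gamma> v \<in> S) \<and> (\<forall>v\<in>V. c v \<ge> 0)"

definition valid_platform :: "'s set \<Rightarrow> ('s \<Rightarrow> nat) \<Rightarrow> bool" where
  "valid_platform S M \<longleftrightarrow> (\<forall>s\<in>S. M s \<ge> 1)"

definition is_path :: "'v set \<Rightarrow> ('v \<times> 'v) set \<Rightarrow> 'v list \<Rightarrow> bool" where
  "is_path V E p \<longleftrightarrow> p \<noteq> [] \<and> set p \<subseteq> V \<and>
     (\<forall>i. Suc i < length p \<longrightarrow> (p ! i, p ! Suc i) \<in> E)"

definition path_weight :: "('v \<Rightarrow> real) \<Rightarrow> 'v list \<Rightarrow> real" where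
  "path_weight w p = sum_list (map w p)"

definition len :: "'v set \<Rightarrow> ('v \<times> 'v) set \<Rightarrow> ('v \<Rightarrow> real) \<Rightarrow> real" where
  "len V E w = Max (path_weight w ` {p. is_path V E p})"

definition vol :: "'v set \<Rightarrow> ('v \<Rightarrow> 's) \<Rightarrow> ('v \<Rightarrow> real) \<Rightarrow> 's \<Rightarrow> real" where
  "vol V \<gamma> c s = (\<Sum>u\<in>{u\<in>V. \<gamma> u = s}. c u)"

definition scaled_wcet :: "('v \<Rightarrow> 's) \<Rightarrow> ('v \<Rightarrow> real) \<Rightarrow> ('s \<Rightarrow> nat) \<Rightarrow> 'v \<Rightarrow> real" where
  "scaled_wcet \<gamma> c M v = c v * (1 - 1 / real (M (\<gamma> v)))"

definition B1 ::
  "'v set \<Rightarrow> ('v \<times> 'v) set \<Rightarrow> 's set \<Rightarrow> ('v \<Rightarrow> 's) \<Rightarrow> ('v \<Rightarrow> real) \<Rightarrow> ('s \<Rightarrow> nat) \<Rightarrow> real" where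
  "B1 V E S \<gamma> c M = len V E (scaled_wcet \<gamma> c M) + (\<Sum>s\<in>S. vol V \<gamma> c s / real (M s))"

end

theory Submission
  imports Defs
begin

text \<open>Adding cores of type \<open>s\<close> lowers \<open>1/M s\<close> by some \<open>\<delta> \<ge> 0\<close>. The volume term then drops by
  exactly \<open>vol s \<cdot> \<delta>\<close>, while every scaled weight of a type-\<open>s\<close> vertex grows by \<open>c v \<cdot> \<delta>\<close>. Paths in
  a DAG are repetition-free, so any path gains at most \<open>\<delta>\<close> times the total WCET of the type-\<open>s\<close>
  vertices, i.e. at most \<open>vol s \<cdot> \<delta>\<close>; hence the longest path cannot outgrow the volume saving.\<close>

lemma is_path_trancl:
  assumes "is_path V E p" "i < j" "j < length p"
  shows "(p ! i, p ! j) \<in> E\<^sup>+"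
  using assms(2,3)
proof (induction j)
  case 0
  then show ?case by simp
next
  case (Suc j)
  have edge: "(p ! j, p ! Suc j) \<in> E"
    using assms(1) Suc.prems unfolding is_path_def by blast
  show ?case
  proof (cases "i = j")
    case True
    then show ?thesis using edge by auto
  next
    case False
    then have "(p ! i, p ! j) \<in> E\<^sup>+" using Suc by auto
    then show ?thesis using edge by (rule trancl_into_trancl)
  qed
qed

lemma distinct_if_is_path:
  assumes "acyclic E" "is_path V E p"
  shows "distinct p"
  unfolding distinct_conv_nth
proof (intro allI impI)
  fix i j assume "i < length p" "j < length p" "i \<noteq> j"
  then have "(p ! i, p ! j) \<in> E\<^sup>+ \<or> (p ! j, p ! i) \<in> E\<^sup>+"
    using is_path_trancl[OF assms(2)] by (metis nat_neq_iff)
  then show "p ! i \<noteq> p ! j"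
    using assms(1) unfolding acyclic_def by auto
qed

lemma finite_paths:
  assumes "finite V" "acyclic E"
  shows "finite {p. is_path V E p}"
proof (rule finite_subset)
  show "{p. is_path V E p} \<subseteq> {p. set p \<subseteq> V \<and> length p \<le> card V}"
  proof safe
    fix p assume p: "is_path V E p"
    then have "set p \<subseteq> V" unfolding is_path_def by blast
    moreover have "distinct p" using distinct_if_is_path assms(2) p by blast
    ultimately show "length p \<le> card V"
      using assms(1) by (metis card_mono distinct_card)
  qed (auto simp: is_path_def)
  show "finite {p. set p \<subseteq> V \<and> length p \<le> card V}"
    using finite_lists_length_le[OF assms(1)] by simp
qed

lemma path_weight_eq_sum_set:
  assumes "acyclic E" "is_path V E p"
  shows "path_weight w p = (\<Sum>v\<in>set p. w v)"
  using distinct_if_is_path[OF assms] unfolding path_weight_def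
  by (simp add: sum_list_distinct_conv_sum_set)

lemma len_le_len_plus_sum:
  assumes "finite V" "acyclic E" "{p. is_path V E p} \<noteq> {}"
    and "\<And>v. v \<in> V \<Longrightarrow> w' v \<le> w v + d v" and "\<And>v. v \<in> V \<Longrightarrow> d v \<ge> 0"
  shows "len V E w' \<le> len V E w + (\<Sum>v\<in>V. d v)"
  unfolding len_def[of V E w']
proof (rule Max.boundedI)
  show "finite (path_weight w' ` {p. is_path V E p})"
    using finite_paths[OF assms(1,2)] by blast
  show "path_weight w' ` {p. is_path V E p} \<noteq> {}" using assms(3) by blast
next
  fix x assume "x \<in> path_weight w' ` {p. is_path V E p}"
  then obtain p where p: "is_path V E p" and x: "x = path_weight w' p" by blast
  have sub: "set p \<subseteq> V" using p unfolding is_path_def by blast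
  have "x = (\<Sum>v\<in>set p. w' v)" using x path_weight_eq_sum_set[OF assms(2) p] by simp
  also have "\<dots> \<le> (\<Sum>v\<in>set p. w v) + (\<Sum>v\<in>set p. d v)"
    using sub assms(4) by (simp add: sum.distrib[symmetric] sum_mono subsetD)
  also have "(\<Sum>v\<in>set p. w v) = path_weight w p"
    using path_weight_eq_sum_set[OF assms(2) p] by simp
  also have "\<dots> \<le> len V E w"
    unfolding len_def using finite_paths[OF assms(1,2)] p by (intro Max_ge) auto
  also have "(\<Sum>v\<in>set p. d v) \<le> (\<Sum>v\<in>V. d v)"
    using sub assms(1,5) by (intro sum_mono2) auto
  finally show "x \<le> len V E w + (\<Sum>v\<in>V. d v)" by simp
qed

lemma paths_nonempty_if_typed_dag_task:
  assumes "typed_dag_task V E S \<gamma> c"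
  shows "{p. is_path V E p} \<noteq> {}"
proof -
  obtain v where "is_source V E v" using assms unfolding typed_dag_task_def by blast
  then have "is_path V E [v]" unfolding is_path_def is_source_def by auto
  then show ?thesis by blast
qed

lemma scaled_wcet_update:
  assumes "\<forall>t. t \<noteq> s \<longrightarrow> M' t = M t"
  shows "scaled_wcet \<gamma> c M' v =
    scaled_wcet \<gamma> c M v + (if \<gamma> v = s then c v * (1 / real (M s) - 1 / real (M' s)) else 0)"
  using assms unfolding scaled_wcet_def by (auto simp: algebra_simps)

lemma sum_if_type_eq_vol:
  assumes "finite V"
  shows "(\<Sum>v\<in>V. if \<gamma> v = s then c v * x else 0) = vol V \<gamma> c s * x"
  unfolding vol_def sum_distrib_right using assms by (simp add: sum.If_cases Int_def)

lemma sum_update_one: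
  fixes f g :: "'a \<Rightarrow> 'b::ab_group_add"
  assumes "finite S" "s \<in> S" "\<forall>t. t \<noteq> s \<longrightarrow> g t = f t"
  shows "(\<Sum>t\<in>S. g t) = (\<Sum>t\<in>S. f t) + (g s - f s)"
proof -
  have "(\<Sum>t\<in>S - {s}. g t) = (\<Sum>t\<in>S - {s}. f t)" using assms(3) by simp
  then show ?thesis using assms(1,2) by (simp add: sum.remove algebra_simps)
qed

theorem corollary2:
  fixes V :: "'v set" and E :: "('v \<times> 'v) set" and S :: "'s set"
    and \<gamma> :: "'v \<Rightarrow> 's" and c :: "'v \<Rightarrow> real" and M M' :: "'s \<Rightarrow> nat" and s :: 's
  assumes "typed_dag_task V E S \<gamma> c"
    and "valid_platform S M"
    and "s \<in> S"
    and "M s \<le> M' s"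
    and "\<forall>t. t \<noteq> s \<longrightarrow> M' t = M t"
  shows "B1 V E S \<gamma> c M' \<le> B1 V E S \<gamma> c M"
proof -
  have task: "finite V" "acyclic E" "\<forall>v\<in>V. c v \<ge> 0" and "finite S"
    using assms(1) unfolding typed_dag_task_def by auto
  define \<delta> where "\<delta> = 1 / real (M s) - 1 / real (M' s)"
  have "M s \<ge> 1" using assms(2,3) unfolding valid_platform_def by blast
  then have "\<delta> \<ge> 0" unfolding \<delta>_def using assms(4) by (simp add: frac_le)
  have "len V E (scaled_wcet \<gamma> c M') \<le>
      len V E (scaled_wcet \<gamma> c M) + (\<Sum>v\<in>V. if \<gamma> v = s then c v * \<delta> else 0)"
    using task \<open>\<delta> \<ge> 0\<close> paths_nonempty_if_typed_dag_task[OF assms(1)]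
    by (intro len_le_len_plus_sum) (auto simp: scaled_wcet_update[OF assms(5)] \<delta>_def)
  also have "(\<Sum>v\<in>V. if \<gamma> v = s then c v * \<delta> else 0) = vol V \<gamma> c s * \<delta>"
    using task(1) by (rule sum_if_type_eq_vol)
  finally have "len V E (scaled_wcet \<gamma> c M') \<le> len V E (scaled_wcet \<gamma> c M) + vol V \<gamma> c s * \<delta>" .
  moreover have "(\<Sum>t\<in>S. vol V \<gamma> c t / real (M' t)) =
      (\<Sum>t\<in>S. vol V \<gamma> c t / real (M t)) - vol V \<gamma> c s * \<delta>"
    using sum_update_one[OF \<open>finite S\<close> assms(3),
        of "\<lambda>t. vol V \<gamma> c t / real (M t)" "\<lambda>t. vol V \<gamma> c t / real (M' t)"] assms(5)
    unfolding \<delta>_def by (simp add: algebra_simps)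
  ultimately show ?thesis unfolding B1_def by linarith
qed

end
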